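(* Let $T\in B(\mathcal{F})$ be a block-diagonal operator satisfying \[\sum_{n=1}^\infty\|T|_{\mathcal{F}_{n+1}}-(T|_{\mathcal{F}_n})\otimes I\|<\infty,\] where $(T|_{\mathcal{F}_n})\otimes I$ acts on $\mathcal{F}_{n+1}=\mathcal{F}_n\otimes\mathbb{C}^d$. Then $T\in\mathcal{C}=C^*(L_1,\ldots,L_d)$.
   Context: $d\ge2$; $\xi_1,\ldots,\xi_d$ is the standard orthonormal basis of $\mathbb{C}^d$. $\mathcal{F}=\bigoplus_{n\ge0}\mathcal{F}_n$ is the full Fock space, $\mathcal{F}_0=\mathbb{C}\Omega$, $\mathcal{F}_n=(\mathbb{C}^d)^{\otimes n}$ with the usual inner product. $L_j\eta=\xi_j\otimes\eta$ (and $L_j\Omega=\xi_j$) are the left creation operators. $T$ is block-diagonal if $T(\mathcal{F}_n)\subseteq\mathcal{F}_n$ for all $n$. *)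

theory Defs
  imports "HOL-Analysis.Analysis"
begin

text \<open>Full Fock space over C^d, realised as l2 over words in the alphabet 'd
  (a finite type with CARD('d) = d). The word [i1,...,in] stands for
  xi_i1 (x) ... (x) xi_in, the empty word for the vacuum Omega.\<close>

type_synonym 'd vec = "'d list \<Rightarrow> complex"
type_synonym 'd op = "'d vec \<Rightarrow> 'd vec"

definition fock :: "'d vec set" where
  "fock = {f. (\<lambda>w. (cmod (f w))\<^sup>2) summable_on UNIV}"

definition fnorm :: "'d vec \<Rightarrow> real" where
  "fnorm f = sqrt (\<Sum>\<^sub>\<infinity>w. (cmod (f w))\<^sup>2)"

definition finner :: "'d vec \<Rightarrow> 'd vec \<Rightarrow> complex" where
  "finner f g = (\<Sum>\<^sub>\<infinity>w. cnj (f w) * g w)"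

definition fock_n :: "nat \<Rightarrow> 'd vec set" where
  "fock_n n = {f \<in> fock. \<forall>w. length w \<noteq> n \<longrightarrow> f w = 0}"

definition bounded_op :: "'d op \<Rightarrow> bool" where
  "bounded_op T \<longleftrightarrow>
     (\<forall>f\<in>fock. T f \<in> fock) \<and>
     (\<forall>f\<in>fock. \<forall>g\<in>fock. \<forall>a b. T (\<lambda>w. a * f w + b * g w) = (\<lambda>w. a * T f w + b * T g w)) \<and>
     (\<exists>C. \<forall>f\<in>fock. fnorm (T f) \<le> C * fnorm f)"

definition opnorm_on :: "'d vec set \<Rightarrow> 'd op \<Rightarrow> real" where
  "opnorm_on S T = Sup {fnorm (T f) | f. f \<in> S \<and> fnorm f \<le> 1}"

definition op_diff :: "'d op \<Rightarrow> 'd op \<Rightarrow> 'd op" where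
  "op_diff S T = (\<lambda>f w. S f w - T f w)"

definition op_add :: "'d op \<Rightarrow> 'd op \<Rightarrow> 'd op" where
  "op_add S T = (\<lambda>f w. S f w + T f w)"

definition op_scale :: "complex \<Rightarrow> 'd op \<Rightarrow> 'd op" where
  "op_scale c T = (\<lambda>f w. c * T f w)"

definition adj :: "'d op \<Rightarrow> 'd op" where
  "adj T = (SOME S. bounded_op S \<and>
              (\<forall>f\<in>fock. \<forall>g\<in>fock. finner (T f) g = finner f (S g)))"

definition create :: "'d \<Rightarrow> 'd op" where
  "create j f = (\<lambda>w. case w of [] \<Rightarrow> 0 | i # v \<Rightarrow> if i = j then f v else 0)"

inductive_set star_alg_L :: "'d op set" where
  gen: "create j \<in> star_alg_L"
| adj: "T \<in> star_alg_L \<Longrightarrow> adj T \<in> star_alg_L"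
| add: "S \<in> star_alg_L \<Longrightarrow> T \<in> star_alg_L \<Longrightarrow> op_add S T \<in> star_alg_L"
| mult: "S \<in> star_alg_L \<Longrightarrow> T \<in> star_alg_L \<Longrightarrow> S \<circ> T \<in> star_alg_L"
| scale: "T \<in> star_alg_L \<Longrightarrow> op_scale c T \<in> star_alg_L"

definition cuntz_toeplitz :: "'d op set" where
  "cuntz_toeplitz = {T. bounded_op T \<and>
     (\<forall>e>0. \<exists>S\<in>star_alg_L. opnorm_on fock (op_diff T S) < e)}"

definition block_diagonal :: "'d op \<Rightarrow> bool" where
  "block_diagonal T \<longleftrightarrow> (\<forall>n. \<forall>f\<in>fock_n n. T f \<in> fock_n n)"

text \<open>(T|F_n) (x) I acting on F_{n+1} = F_n (x) C^d, where
  xi_w (x) xi_j corresponds to the word w @ [j].\<close>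
definition tensor_id :: "nat \<Rightarrow> 'd op \<Rightarrow> 'd op" where
  "tensor_id n T = (\<lambda>f w. if length w = Suc n
       then T (\<lambda>v. if length v = n then f (v @ [last w]) else 0) (butlast w)
       else 0)"

end

theory Submission
  imports Defs
begin

text \<open>Write \<open>T\<^sub>n\<close> for the restriction of \<open>T\<close> to \<open>F\<^sub>n\<close>. The truncation \<open>S\<^sub>N\<close> of \<open>T\<close> acts as \<open>T\<^sub>k\<close>
  on \<open>F\<^sub>k\<close> for \<open>k < N\<close> and as \<open>T\<^sub>N \<otimes> I\<close> on \<open>F\<^sub>k = F\<^sub>N \<otimes> F\<^bsub>k-N\<^esub>\<close> for \<open>k \<ge> N\<close>. Its matrix is a finite
  linear combination of the operators \<open>\<xi>\<^sub>u \<xi>\<^sub>v\<^sup>*\<close> and \<open>L\<^sub>u L\<^sub>v\<^sup>*\<close> for words \<open>u, v\<close>, which lie in the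
  *-algebra generated by the \<open>L\<^sub>j\<close> because the vacuum projection is \<open>I - \<Sum>\<^sub>j L\<^sub>j L\<^sub>j\<^sup>*\<close>. On \<open>F\<^sub>k\<close> the
  difference \<open>T\<^sub>k - T\<^sub>N \<otimes> I\<close> telescopes into \<open>\<Sum>\<^bsub>N\<le>m<k\<^esub> (T\<^bsub>m+1\<^esub> - T\<^sub>m \<otimes> I) \<otimes> I\<close>, so \<open>\<parallel>T - S\<^sub>N\<parallel>\<close> is at
  most the tail \<open>\<Sum>\<^bsub>m\<ge>N\<^esub> \<parallel>T\<^bsub>m+1\<^esub> - T\<^sub>m \<otimes> I\<parallel>\<close> of the convergent series.\<close>

subsection \<open>Square-summable functions on words\<close>

definition words :: "nat \<Rightarrow> 'd list set" where
  "words n = {w. length w = n}"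

lemma finite_length_eq [simp]: "finite {w::'d::finite list. length w = n}"
  using finite_lists_length_eq[of "UNIV::'d set" n] by simp

lemma finite_words [simp]: "finite (words n :: 'd::finite list set)"
  by (simp add: words_def)

lemma finite_shorter_words [simp]: "finite {w::'d::finite list. length w < n}"
proof -
  have "{w::'d list. length w < n} \<subseteq> {w. set w \<subseteq> UNIV \<and> length w \<le> n}" by auto
  then show ?thesis using finite_lists_length_le[of "UNIV::'d set" n] finite_subset by auto
qed

lemma sum_shorter_words:
  "(\<Sum>w\<in>{w::'d::finite list. length w < n}. F w) = (\<Sum>k<n. \<Sum>w\<in>words k. F w)"
proof (induction n)
  case 0 then show ?case by simp
next
  case (Suc n)
  have split: "{w::'d list. length w < Suc n} = {w. length w < n} \<union> words n" by (auto simp: words_def)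
  have "(\<Sum>w\<in>{w::'d list. length w < Suc n}. F w)
      = (\<Sum>w\<in>{w::'d list. length w < n}. F w) + (\<Sum>w\<in>words n. F w)"
    unfolding split by (rule sum.union_disjoint) (auto simp: words_def)
  then show ?case using Suc by simp
qed

lemma sum_words_add:
  "(\<Sum>w\<in>words (m + r). F w) = (\<Sum>u\<in>(words m :: 'd::finite list set). \<Sum>z\<in>words r. F (u @ z))"
proof -
  have image: "words (m + r) = (\<lambda>(u, z). u @ z) ` (words m \<times> (words r :: 'd list set))"
  proof
    show "words (m + r) \<subseteq> (\<lambda>(u, z). u @ z) ` (words m \<times> (words r :: 'd list set))"
    proof
      fix w :: "'d list" assume "w \<in> words (m + r)"
      then have "w = (\<lambda>(u, z). u @ z) (take m w, drop m w)" "(take m w, drop m w) \<in> words m \<times> words r"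
        by (auto simp: words_def)
      then show "w \<in> (\<lambda>(u, z). u @ z) ` (words m \<times> (words r :: 'd list set))" by blast
    qed
  qed (auto simp: words_def)
  have "inj_on (\<lambda>(u, z). u @ z) (words m \<times> (words r :: 'd list set))"
    by (auto simp: inj_on_def words_def)
  then have "(\<Sum>w\<in>words (m + r). F w) = (\<Sum>p\<in>words m \<times> words r. F ((\<lambda>(u, z). u @ z) p))"
    unfolding image by (rule sum.reindex[unfolded o_def])
  then show ?thesis by (simp add: sum.cartesian_product split_def)
qed

lemma L2_set_le_scaled_iff:
  assumes "0 \<le> c"
  shows "L2_set f A \<le> c * L2_set g A \<longleftrightarrow> (\<Sum>x\<in>A. (f x)\<^sup>2) \<le> c\<^sup>2 * (\<Sum>x\<in>A. (g x)\<^sup>2)"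
proof -
  have "c * L2_set g A = sqrt (c\<^sup>2 * (\<Sum>x\<in>A. (g x)\<^sup>2))"
    using assms by (simp add: L2_set_def real_sqrt_mult)
  then show ?thesis by (simp add: L2_set_def sum_nonneg)
qed

lemma L2_set_cmod_add:
  "L2_set (\<lambda>w. cmod (a w + b w)) A \<le> L2_set (\<lambda>w. cmod (a w)) A + L2_set (\<lambda>w. cmod (b w)) A"
proof -
  have "L2_set (\<lambda>w. cmod (a w + b w)) A \<le> L2_set (\<lambda>w. cmod (a w) + cmod (b w)) A"
    by (rule L2_set_mono) (auto simp: norm_triangle_ineq)
  also have "\<dots> \<le> L2_set (\<lambda>w. cmod (a w)) A + L2_set (\<lambda>w. cmod (b w)) A"
    by (rule L2_set_triangle_ineq)
  finally show ?thesis .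
qed

lemma L2_set_cmod_sum:
  assumes "finite I"
  shows "L2_set (\<lambda>w. cmod (\<Sum>i\<in>I. F i w)) A \<le> (\<Sum>i\<in>I. L2_set (\<lambda>w. cmod (F i w)) A)"
  using assms
proof (induction I rule: finite_induct)
  case empty then show ?case by (simp add: L2_set_0')
next
  case (insert i I)
  then show ?case
    using L2_set_cmod_add[of "F i" "\<lambda>w. \<Sum>i\<in>I. F i w" A] by simp
qed

lemma fock_finite_support:
  assumes "finite A" "\<And>w. w \<notin> A \<Longrightarrow> f w = 0"
  shows "f \<in> fock"
proof -
  have "(\<lambda>w. (cmod (f w))\<^sup>2) summable_on A" using assms(1) by simp
  then show ?thesis unfolding fock_def
    using summable_on_cong_neutral[of UNIV A "\<lambda>w. (cmod (f w))\<^sup>2"] assms(2) by auto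
qed

lemma fnorm_finite_support:
  assumes "finite A" "\<And>w. w \<notin> A \<Longrightarrow> f w = 0"
  shows "fnorm f = L2_set (\<lambda>w. cmod (f w)) A"
proof -
  have "(\<Sum>\<^sub>\<infinity>w. (cmod (f w))\<^sup>2) = (\<Sum>\<^sub>\<infinity>w\<in>A. (cmod (f w))\<^sup>2)"
    by (rule infsum_cong_neutral) (use assms(2) in auto)
  then show ?thesis unfolding fnorm_def L2_set_def using assms(1) by simp
qed

lemma fock_n_iff: "f \<in> fock_n n \<longleftrightarrow> (\<forall>w. length w \<noteq> n \<longrightarrow> (f::'d::finite vec) w = 0)"
  unfolding fock_n_def using fock_finite_support[of "words n" f] by (auto simp: words_def)

lemma fnorm_fock_n: "(f::'d::finite vec) \<in> fock_n n \<Longrightarrow> fnorm f = L2_set (\<lambda>w. cmod (f w)) (words n)"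
  by (rule fnorm_finite_support) (auto simp: fock_n_iff words_def)

lemma fnorm_nonneg: "fnorm f \<ge> 0"
  unfolding fnorm_def by (simp add: infsum_nonneg)

lemma norm_le_fnorm:
  assumes "f \<in> fock"
  shows "cmod (f w) \<le> fnorm f"
proof -
  have "(\<Sum>\<^sub>\<infinity>v\<in>{w}. (cmod (f v))\<^sup>2) \<le> (\<Sum>\<^sub>\<infinity>v. (cmod (f v))\<^sup>2)"
    by (rule infsum_mono_neutral) (use assms in \<open>auto simp: fock_def\<close>)
  then show ?thesis unfolding fnorm_def by (simp add: real_le_rsqrt)
qed

lemma fock_zero [simp]: "(\<lambda>w. 0) \<in> fock"
  by (rule fock_finite_support[of "{}"]) auto

lemma fock_add: "f \<in> fock \<Longrightarrow> g \<in> fock \<Longrightarrow> (\<lambda>w. f w + g w) \<in> fock"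
  unfolding fock_def
proof clarify
  assume "(\<lambda>w. (cmod (f w))\<^sup>2) summable_on UNIV" "(\<lambda>w. (cmod (g w))\<^sup>2) summable_on UNIV"
  then have "(\<lambda>w. 2 * (cmod (f w))\<^sup>2 + 2 * (cmod (g w))\<^sup>2) summable_on UNIV"
    by (intro summable_on_add summable_on_cmult_right)
  moreover have "(cmod (a + b))\<^sup>2 \<le> 2 * (cmod a)\<^sup>2 + 2 * (cmod b)\<^sup>2" for a b :: complex
  proof -
    have "(cmod (a + b))\<^sup>2 \<le> (cmod a + cmod b)\<^sup>2"
      by (rule power_mono) (auto simp: norm_triangle_ineq)
    also have "\<dots> \<le> 2 * (cmod a)\<^sup>2 + 2 * (cmod b)\<^sup>2"
      using zero_le_power2[of "cmod a - cmod b"] unfolding power2_sum power2_diff by linarith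
    finally show ?thesis .
  qed
  ultimately show "(\<lambda>w. (cmod (f w + g w))\<^sup>2) summable_on UNIV"
    by (rule summable_on_comparison_test) auto
qed

lemma fock_scale: "f \<in> fock \<Longrightarrow> (\<lambda>w. c * f w) \<in> fock"
  unfolding fock_def by (auto simp: norm_mult power_mult_distrib intro: summable_on_cmult_right)

lemma fock_sum:
  assumes "finite A" "\<And>v. v \<in> A \<Longrightarrow> g v \<in> fock"
  shows "(\<lambda>w. \<Sum>v\<in>A. c v * g v w) \<in> fock"
  using assms by (induction A rule: finite_induct) (auto intro!: fock_add fock_scale)

lemma fock_restrict: "f \<in> fock \<Longrightarrow> (\<lambda>w. if P w then f w else 0) \<in> fock"
  unfolding fock_def mem_Collect_eq by (erule summable_on_comparison_test) auto

lemma fnorm_tail_small: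
  fixes f :: "'d vec"
  assumes "f \<in> fock" "e > 0"
  shows "\<exists>M. \<forall>M'\<ge>M. fnorm (\<lambda>w. if M' \<le> length w then f w else 0) < e"
proof -
  define g where "g = (\<lambda>w. (cmod (f w))\<^sup>2)"
  have g: "g summable_on UNIV" using assms(1) by (simp add: fock_def g_def)
  have "e\<^sup>2 / 2 > 0" using assms(2) by simp
  then obtain F where F: "finite F" "dist (sum g F) (infsum g UNIV) \<le> e\<^sup>2 / 2"
    using infsum_finite_approximation[OF g] by blast
  define M where "M = Suc (Max (insert 0 (length ` F)))"
  show ?thesis
  proof (intro exI allI impI)
    fix M' assume "M \<le> M'"
    define X where "X = {w::'d list. M' \<le> length w}"
    have "length w < M" if "w \<in> F" for w
      using F(1) that unfolding M_def by (simp add: le_imp_less_Suc)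
    then have "F \<subseteq> UNIV - X" using \<open>M \<le> M'\<close> unfolding X_def by fastforce
    moreover have gX: "g summable_on X" and gX': "g summable_on (UNIV - X)"
      by (auto intro: summable_on_subset[OF g])
    ultimately have "sum g F \<le> infsum g (UNIV - X)"
      by (intro finite_sum_le_infsum F(1)) (simp_all add: g_def)
    moreover have "infsum g UNIV = infsum g (UNIV - X) + infsum g X"
      using infsum_Un_disjoint[OF gX' gX] by auto
    ultimately have "infsum g X \<le> e\<^sup>2 / 2" using F(2) unfolding dist_real_def by linarith
    moreover have "(\<Sum>\<^sub>\<infinity>w. (cmod (if M' \<le> length w then f w else 0))\<^sup>2) = infsum g X"
      by (rule infsum_cong_neutral) (auto simp: X_def g_def)
    ultimately have "fnorm (\<lambda>w. if M' \<le> length w then f w else 0) \<le> sqrt (e\<^sup>2 / 2)"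
      by (simp add: fnorm_def)
    also have "\<dots> < sqrt (e\<^sup>2)" using assms(2) by (simp del: real_sqrt_abs)
    also have "\<dots> = e" using assms(2) by simp
    finally show "fnorm (\<lambda>w. if M' \<le> length w then f w else 0) < e" .
  qed
qed

lemma fnorm_le_blockwise:
  fixes f D :: "'d::finite vec"
  assumes f: "f \<in> fock" and c: "0 \<le> c"
    and blocks: "\<And>k. L2_set (\<lambda>w. cmod (D w)) (words k) \<le> c * L2_set (\<lambda>w. cmod (f w)) (words k)"
  shows "fnorm D \<le> c * fnorm f"
proof -
  define s where "s = (\<Sum>\<^sub>\<infinity>w. (cmod (f w))\<^sup>2)"
  have f_summable: "(\<lambda>w. (cmod (f w))\<^sup>2) summable_on UNIV" using f by (simp add: fock_def)
  have finite_sums: "(\<Sum>w\<in>F. (cmod (D w))\<^sup>2) \<le> c\<^sup>2 * s" if F: "finite F" for F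
  proof -
    define K where "K = Suc (Max (insert 0 (length ` F)))"
    have "F \<subseteq> {w. length w < K}" using F unfolding K_def by (auto simp: le_imp_less_Suc)
    then have "(\<Sum>w\<in>F. (cmod (D w))\<^sup>2) \<le> (\<Sum>w\<in>{w. length w < K}. (cmod (D w))\<^sup>2)"
      by (intro sum_mono2) auto
    also have "\<dots> = (\<Sum>k<K. \<Sum>w\<in>words k. (cmod (D w))\<^sup>2)" by (rule sum_shorter_words)
    also have "\<dots> \<le> (\<Sum>k<K. c\<^sup>2 * (\<Sum>w\<in>words k. (cmod (f w))\<^sup>2))"
      using blocks by (intro sum_mono) (simp add: L2_set_le_scaled_iff[OF c])
    also have "\<dots> = c\<^sup>2 * (\<Sum>w\<in>{w. length w < K}. (cmod (f w))\<^sup>2)"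
      by (simp add: sum_shorter_words sum_distrib_left)
    also have "\<dots> \<le> c\<^sup>2 * s" unfolding s_def
      by (rule mult_left_mono[OF finite_sum_le_infsum[OF f_summable]]) auto
    finally show ?thesis .
  qed
  have "(\<lambda>w. (cmod (D w))\<^sup>2) summable_on UNIV"
    by (rule nonneg_bdd_above_summable_on) (auto intro!: bdd_aboveI[of _ "c\<^sup>2 * s"] finite_sums)
  then have "(\<Sum>\<^sub>\<infinity>w. (cmod (D w))\<^sup>2) \<le> c\<^sup>2 * s"
    by (rule infsum_le_finite_sums) (rule finite_sums)
  then have "fnorm D \<le> sqrt (c\<^sup>2 * s)" unfolding fnorm_def by simp
  also have "\<dots> = c * fnorm f" using c by (simp add: fnorm_def s_def real_sqrt_mult)
  finally show ?thesis .
qed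

lemma opnorm_on_fock_le:
  fixes A :: "'d op"
  assumes bound: "\<And>f. f \<in> fock \<Longrightarrow> fnorm (A f) \<le> c * fnorm f" and c: "0 \<le> c"
  shows "opnorm_on fock A \<le> c"
  unfolding opnorm_on_def
proof (rule cSup_least)
  have "(\<lambda>w. 0) \<in> fock \<and> fnorm (\<lambda>w::'d list. 0::complex) \<le> 1" by (simp add: fnorm_def)
  then show "{fnorm (A f) |f. f \<in> fock \<and> fnorm f \<le> 1} \<noteq> {}" by blast
next
  fix x assume "x \<in> {fnorm (A f) |f. f \<in> fock \<and> fnorm f \<le> 1}"
  then obtain f where f: "f \<in> fock" "fnorm f \<le> 1" "x = fnorm (A f)" by blast
  then have "x \<le> c * fnorm f" using bound by blast
  also have "\<dots> \<le> c" using f(2) c by (simp add: mult_left_le)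
  finally show "x \<le> c" .
qed

text \<open>\<open>opnorm_on\<close> is a supremum over a possibly unbounded set, so it only deserves its name once some
  bound \<open>K\<close> is known.\<close>

lemma opnorm_on_fock_n:
  fixes B :: "'d::finite op"
  assumes homogeneous: "\<And>h c. h \<in> fock_n n \<Longrightarrow> B (\<lambda>w. c * h w) = (\<lambda>w. c * B h w)"
    and supported: "\<And>h w. h \<in> fock_n n \<Longrightarrow> length w \<noteq> n \<Longrightarrow> B h w = 0"
    and bounded: "\<And>h. h \<in> fock_n n \<Longrightarrow>
       L2_set (\<lambda>w. cmod (B h w)) (words n) \<le> K * L2_set (\<lambda>w. cmod (h w)) (words n)"
  shows opnorm_on_fock_n_nonneg: "0 \<le> opnorm_on (fock_n n) B"
    and L2_set_le_opnorm_on_fock_n: "\<And>h. h \<in> fock_n n \<Longrightarrow>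
       L2_set (\<lambda>w. cmod (B h w)) (words n) \<le> opnorm_on (fock_n n) B * L2_set (\<lambda>w. cmod (h w)) (words n)"
proof -
  define Q where "Q = {fnorm (B f) | f. f \<in> fock_n n \<and> fnorm f \<le> 1}"
  have fnorm_B: "fnorm (B h) = L2_set (\<lambda>w. cmod (B h w)) (words n)" if "h \<in> fock_n n" for h
    by (rule fnorm_finite_support) (auto simp: words_def supported[OF that])
  have zero: "(\<lambda>w. 0) \<in> (fock_n n :: 'd vec set)" by (simp add: fock_n_iff)
  have B_zero: "B (\<lambda>w. 0) = (\<lambda>w. 0)" using homogeneous[OF zero, of 0] by simp
  have bdd: "bdd_above Q"
  proof (rule bdd_aboveI)
    fix x assume "x \<in> Q"
    then obtain f where f: "f \<in> fock_n n" "fnorm f \<le> 1" "x = fnorm (B f)" unfolding Q_def by blast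
    have "x \<le> K * fnorm f" using f bounded[OF f(1)] fnorm_B[OF f(1)] fnorm_fock_n[OF f(1)] by simp
    also have "\<dots> \<le> \<bar>K\<bar> * fnorm f" by (rule mult_right_mono) (auto simp: fnorm_nonneg)
    also have "\<dots> \<le> \<bar>K\<bar>" using f(2) by (simp add: mult_left_le)
    finally show "x \<le> \<bar>K\<bar>" .
  qed
  have "fnorm (B (\<lambda>w. 0)) \<in> Q" unfolding Q_def using zero by (auto simp: fnorm_def)
  then have "fnorm (B (\<lambda>w. 0)) \<le> Sup Q" using bdd by (rule cSup_upper)
  then show "0 \<le> opnorm_on (fock_n n) B" unfolding opnorm_on_def Q_def[symmetric] B_zero
    by (simp add: fnorm_def)
  fix h :: "'d vec" assume h: "h \<in> fock_n n"
  define r where "r = L2_set (\<lambda>w. cmod (h w)) (words n)"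
  show "L2_set (\<lambda>w. cmod (B h w)) (words n) \<le> opnorm_on (fock_n n) B * r"
  proof (cases "r = 0")
    case True
    then have "h = (\<lambda>w. 0)" using h by (auto simp: r_def L2_set_eq_0_iff words_def fock_n_iff)
    then show ?thesis using B_zero True by (simp add: L2_set_0')
  next
    case False
    then have r: "r > 0" unfolding r_def using L2_set_nonneg[of _ "words n"] by (simp add: less_le)
    define h' where "h' = (\<lambda>w. complex_of_real (1 / r) * h w)"
    have h': "h' \<in> fock_n n" using h by (simp add: fock_n_iff h'_def)
    have "fnorm h' = L2_set (\<lambda>w. (1 / r) * cmod (h w)) (words n)"
      using fnorm_fock_n[OF h'] r by (simp add: h'_def norm_mult norm_divide)
    also have "\<dots> = (1 / r) * r"
      unfolding r_def by (rule L2_set_right_distrib[symmetric]) (use r in simp)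
    also have "\<dots> = 1" using r by simp
    finally have "fnorm (B h') \<le> opnorm_on (fock_n n) B"
      unfolding opnorm_on_def Q_def[symmetric] using h' by (intro cSup_upper[OF _ bdd]) (auto simp: Q_def)
    moreover have "fnorm (B h') = (1 / r) * L2_set (\<lambda>w. cmod (B h w)) (words n)"
    proof -
      have "B h' = (\<lambda>w. complex_of_real (1 / r) * B h w)"
        unfolding h'_def by (rule homogeneous[OF h])
      then have "fnorm (B h') = L2_set (\<lambda>w. (1 / r) * cmod (B h w)) (words n)"
        using fnorm_B[OF h'] r by (simp only: norm_mult norm_of_real) simp
      also have "\<dots> = (1 / r) * L2_set (\<lambda>w. cmod (B h w)) (words n)"
        by (rule L2_set_right_distrib[symmetric]) (use r in simp)
      finally show ?thesis .
    qed
    ultimately show ?thesis using r by (simp add: field_simps)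
  qed
qed

subsection \<open>The *-algebra generated by the creation operators\<close>

definition ann :: "'d \<Rightarrow> 'd op" where
  "ann j f = (\<lambda>v. f (j # v))"

definition basis :: "'d list \<Rightarrow> 'd vec" where
  "basis v = (\<lambda>w. if w = v then 1 else 0)"

lemma basis_fock: "basis v \<in> fock"
  by (rule fock_finite_support[of "{v}"]) (auto simp: basis_def)

lemma finner_basis: "finner (basis v) h = h v"
proof -
  have "finner (basis v) h = (\<Sum>\<^sub>\<infinity>w\<in>{v}. cnj (basis v w) * h w)"
    unfolding finner_def by (rule infsum_cong_neutral) (auto simp: basis_def)
  then show ?thesis by (simp add: basis_def)
qed

lemma create_fock: "f \<in> fock \<Longrightarrow> create j f \<in> fock"
proof -
  assume "f \<in> fock"
  then have "((\<lambda>w. (cmod (create j f w))\<^sup>2) \<circ> Cons j) summable_on UNIV"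
    by (simp add: fock_def create_def o_def)
  then have "(\<lambda>w. (cmod (create j f w))\<^sup>2) summable_on range (Cons j)"
    by (simp add: summable_on_reindex)
  moreover have "(\<lambda>w. (cmod (create j f w))\<^sup>2) summable_on UNIV
      \<longleftrightarrow> (\<lambda>w. (cmod (create j f w))\<^sup>2) summable_on range (Cons j)"
    by (rule summable_on_cong_neutral) (auto simp: create_def split: list.splits)
  ultimately show ?thesis unfolding fock_def by simp
qed

lemma ann_fock:
  assumes "f \<in> fock"
  shows "ann j f \<in> fock" and "fnorm (ann j f) \<le> fnorm f"
proof -
  have f: "(\<lambda>w. (cmod (f w))\<^sup>2) summable_on UNIV" using assms by (simp add: fock_def)
  then have f_Cons: "(\<lambda>w. (cmod (f w))\<^sup>2) summable_on range (Cons j)"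
    by (rule summable_on_subset) auto
  have ann_sq: "(\<lambda>w. (cmod (ann j f w))\<^sup>2) = (\<lambda>w. (cmod (f w))\<^sup>2) \<circ> Cons j"
    by (auto simp: ann_def)
  from f_Cons show "ann j f \<in> fock"
    unfolding fock_def mem_Collect_eq ann_sq by (simp add: summable_on_reindex)
  have "(\<Sum>\<^sub>\<infinity>w. (cmod (ann j f w))\<^sup>2) = (\<Sum>\<^sub>\<infinity>w\<in>range (Cons j). (cmod (f w))\<^sup>2)"
    unfolding ann_sq by (subst infsum_reindex) auto
  also have "\<dots> \<le> (\<Sum>\<^sub>\<infinity>w. (cmod (f w))\<^sup>2)"
    by (rule infsum_mono_neutral[OF f_Cons f]) auto
  finally show "fnorm (ann j f) \<le> fnorm f" unfolding fnorm_def by simp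
qed

lemma finner_create: "finner (create j f) g = finner f (ann j g)"
proof -
  have "finner (create j f) g = (\<Sum>\<^sub>\<infinity>w\<in>range (Cons j). cnj (create j f w) * g w)"
    unfolding finner_def by (rule infsum_cong_neutral) (auto simp: create_def split: list.splits)
  also have "\<dots> = (\<Sum>\<^sub>\<infinity>v. cnj (f v) * g (j # v))"
    by (subst infsum_reindex) (auto simp: create_def o_def)
  finally show ?thesis by (simp add: finner_def ann_def)
qed

lemma bounded_op_ann: "bounded_op (ann j)"
  unfolding bounded_op_def
proof (intro conjI ballI allI exI)
  show "\<And>f. f \<in> fock \<Longrightarrow> ann j f \<in> fock" by (rule ann_fock)
  show "\<And>f g a b. ann j (\<lambda>w. a * f w + b * g w) = (\<lambda>w. a * ann j f w + b * ann j g w)"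
    by (simp add: ann_def)
  show "\<And>f. f \<in> fock \<Longrightarrow> fnorm (ann j f) \<le> 1 * fnorm f" using ann_fock by simp
qed

lemma adj_create:
  assumes g: "g \<in> fock"
  shows "adj (create j) g = ann j g"
proof
  fix v
  let ?is_adj = "\<lambda>S. bounded_op S \<and> (\<forall>f\<in>fock. \<forall>g\<in>fock. finner (create j f) g = finner f (S g))"
  have "?is_adj (ann j)" by (simp add: bounded_op_ann finner_create)
  then have "?is_adj (adj (create j))" unfolding adj_def by (rule someI[of ?is_adj])
  then have "finner (basis v) (adj (create j) g) = finner (create j (basis v)) g"
    using g basis_fock by metis
  then show "adj (create j) g v = ann j g v" by (simp add: finner_basis finner_create)
qed

text \<open>Operators are functions on all of \<open>'d vec\<close>, but members of \<open>star_alg_L\<close> are only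
  pinned down on \<open>fock\<close> (the adjoint is chosen by \<open>SOME\<close>), so membership is tracked up to
  agreement on \<open>fock\<close>.\<close>

definition star_alg_on_fock :: "'d op \<Rightarrow> bool" where
  "star_alg_on_fock X \<longleftrightarrow> (\<exists>S\<in>star_alg_L. \<forall>f\<in>fock. S f = X f) \<and> (\<forall>f\<in>fock. X f \<in> fock)"

lemma star_alg_on_fock_cong:
  "star_alg_on_fock X \<Longrightarrow> (\<And>f. f \<in> fock \<Longrightarrow> Y f = X f) \<Longrightarrow> star_alg_on_fock Y"
  unfolding star_alg_on_fock_def by auto

lemma star_alg_on_fock_create: "star_alg_on_fock (create j)"
  unfolding star_alg_on_fock_def
proof
  show "\<exists>S\<in>star_alg_L. \<forall>f\<in>fock. S f = create j f"
    by (rule bexI[of _ "create j"]) (auto intro: star_alg_L.gen)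
  show "\<forall>f\<in>fock. create j f \<in> fock" using create_fock by auto
qed

lemma star_alg_on_fock_ann: "star_alg_on_fock (ann j)"
  unfolding star_alg_on_fock_def
proof
  show "\<exists>S\<in>star_alg_L. \<forall>f\<in>fock. S f = ann j f"
    by (rule bexI[of _ "adj (create j)"]) (auto intro: star_alg_L.gen star_alg_L.adj simp: adj_create)
  show "\<forall>f\<in>fock. ann j f \<in> fock" using ann_fock(1) by auto
qed

lemma star_alg_on_fock_comp:
  assumes "star_alg_on_fock X" "star_alg_on_fock Y"
  shows "star_alg_on_fock (X \<circ> Y)"
proof -
  obtain S R where S: "S \<in> star_alg_L" "\<forall>f\<in>fock. S f = X f"
    and R: "R \<in> star_alg_L" "\<forall>f\<in>fock. R f = Y f"
    using assms unfolding star_alg_on_fock_def by blast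
  have "S \<circ> R \<in> star_alg_L" using S(1) R(1) by (rule star_alg_L.mult)
  moreover have "\<forall>f\<in>fock. (S \<circ> R) f = (X \<circ> Y) f" "\<forall>f\<in>fock. (X \<circ> Y) f \<in> fock"
    using S R assms unfolding star_alg_on_fock_def by auto
  ultimately show ?thesis unfolding star_alg_on_fock_def by blast
qed

lemma star_alg_on_fock_add:
  assumes "star_alg_on_fock X" "star_alg_on_fock Y"
  shows "star_alg_on_fock (\<lambda>f w. X f w + Y f w)"
proof -
  obtain S R where S: "S \<in> star_alg_L" "\<forall>f\<in>fock. S f = X f"
    and R: "R \<in> star_alg_L" "\<forall>f\<in>fock. R f = Y f"
    using assms unfolding star_alg_on_fock_def by blast
  have "op_add S R \<in> star_alg_L" using S(1) R(1) by (rule star_alg_L.add)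
  moreover have "\<forall>f\<in>fock. op_add S R f = (\<lambda>w. X f w + Y f w)" using S R by (auto simp: op_add_def)
  moreover have "\<forall>f\<in>fock. (\<lambda>w. X f w + Y f w) \<in> fock"
    using assms unfolding star_alg_on_fock_def by (auto intro!: fock_add)
  ultimately show ?thesis unfolding star_alg_on_fock_def by blast
qed

lemma star_alg_on_fock_scale:
  assumes "star_alg_on_fock X"
  shows "star_alg_on_fock (\<lambda>f w. c * X f w)"
proof -
  obtain S where S: "S \<in> star_alg_L" "\<forall>f\<in>fock. S f = X f"
    using assms unfolding star_alg_on_fock_def by blast
  have "op_scale c S \<in> star_alg_L" using S(1) by (rule star_alg_L.scale)
  moreover have "\<forall>f\<in>fock. op_scale c S f = (\<lambda>w. c * X f w)" using S by (auto simp: op_scale_def)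
  moreover have "\<forall>f\<in>fock. (\<lambda>w. c * X f w) \<in> fock"
    using assms unfolding star_alg_on_fock_def by (auto intro!: fock_scale)
  ultimately show ?thesis unfolding star_alg_on_fock_def by blast
qed

lemma star_alg_on_fock_sum:
  assumes "finite I" "\<And>i. i \<in> I \<Longrightarrow> star_alg_on_fock (X i)"
  shows "star_alg_on_fock (\<lambda>f w. \<Sum>i\<in>I. X i f w)"
  using assms
proof (induction I rule: finite_induct)
  case empty
  show ?case using star_alg_on_fock_scale[OF star_alg_on_fock_create, of 0] by simp
next
  case (insert i I)
  then show ?case using star_alg_on_fock_add[of "X i" "\<lambda>f w. \<Sum>i\<in>I. X i f w"] by simp
qed

definition create_word :: "'d list \<Rightarrow> 'd op" where
  "create_word u f = (\<lambda>w. if take (length u) w = u then f (drop (length u) w) else 0)"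

definition ann_word :: "'d list \<Rightarrow> 'd op" where
  "ann_word v f = (\<lambda>w. f (v @ w))"

definition vacuum_proj :: "'d op" where
  "vacuum_proj f = (\<lambda>w. if w = [] then f [] else 0)"

definition rank_one :: "'d list \<Rightarrow> 'd list \<Rightarrow> 'd op" where
  "rank_one u v f = (\<lambda>w. if w = u then f v else 0)"

definition create_ann_word :: "'d list \<Rightarrow> 'd list \<Rightarrow> 'd op" where
  "create_ann_word u v f = (\<lambda>w. if take (length u) w = u then f (v @ drop (length u) w) else 0)"

lemma star_alg_on_fock_id: "star_alg_on_fock (\<lambda>f. f)"
  by (rule star_alg_on_fock_cong[OF star_alg_on_fock_comp[OF star_alg_on_fock_ann star_alg_on_fock_create,
        of undefined undefined]])
    (simp add: ann_def create_def o_def)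

lemma star_alg_on_fock_create_word: "star_alg_on_fock (create_word u)"
proof (induction u)
  case Nil
  show ?case by (rule star_alg_on_fock_cong[OF star_alg_on_fock_id]) (simp add: create_word_def)
next
  case (Cons j u)
  show ?case
    by (rule star_alg_on_fock_cong[OF star_alg_on_fock_comp[OF star_alg_on_fock_create Cons.IH, of j]])
      (auto simp: create_word_def create_def split: list.splits)
qed

lemma star_alg_on_fock_ann_word: "star_alg_on_fock (ann_word v)"
proof (induction v)
  case Nil
  show ?case by (rule star_alg_on_fock_cong[OF star_alg_on_fock_id]) (simp add: ann_word_def)
next
  case (Cons j v)
  show ?case
    by (rule star_alg_on_fock_cong[OF star_alg_on_fock_comp[OF Cons.IH star_alg_on_fock_ann, of j]])
      (auto simp: ann_word_def ann_def)
qed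

lemma sum_create_ann:
  "(\<Sum>j\<in>UNIV. create j (ann j f) w) = (if w = [] then 0 else (f::'d::finite vec) w)"
proof (cases w)
  case (Cons i v)
  have "(\<Sum>j\<in>UNIV. create j (ann j f) w) = (\<Sum>j\<in>UNIV. if i = j then f (i # v) else 0)"
    by (rule sum.cong) (auto simp: Cons create_def ann_def)
  then show ?thesis by (simp add: Cons)
qed (simp add: create_def)

lemma star_alg_on_fock_vacuum_proj: "star_alg_on_fock (vacuum_proj :: 'd::finite op)"
proof -
  have "star_alg_on_fock (\<lambda>f w. \<Sum>j\<in>(UNIV::'d set). create j (ann j f) w)"
    by (rule star_alg_on_fock_sum)
      (auto intro: star_alg_on_fock_comp[OF star_alg_on_fock_create star_alg_on_fock_ann, unfolded o_def])
  then have "star_alg_on_fock (\<lambda>f w. f w + (-1) * (\<Sum>j\<in>(UNIV::'d set). create j (ann j f) w))"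
    by (intro star_alg_on_fock_add star_alg_on_fock_id star_alg_on_fock_scale)
  then show ?thesis
    by (rule star_alg_on_fock_cong) (auto simp: vacuum_proj_def sum_create_ann)
qed

lemma star_alg_on_fock_rank_one: "star_alg_on_fock (rank_one u (v::'d::finite list))"
proof (rule star_alg_on_fock_cong[OF star_alg_on_fock_comp[OF star_alg_on_fock_comp[OF
      star_alg_on_fock_create_word star_alg_on_fock_vacuum_proj] star_alg_on_fock_ann_word, of u v]])
  fix f :: "'d vec"
  show "rank_one u v f = (create_word u \<circ> vacuum_proj \<circ> ann_word v) f"
  proof
    fix w :: "'d list"
    have "take (length u) w = u \<and> drop (length u) w = [] \<longleftrightarrow> w = u"
      by auto
    then show "rank_one u v f w = (create_word u \<circ> vacuum_proj \<circ> ann_word v) f w"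
      by (simp add: rank_one_def create_word_def vacuum_proj_def ann_word_def)
  qed
qed

lemma star_alg_on_fock_create_ann_word: "star_alg_on_fock (create_ann_word u v)"
  by (rule star_alg_on_fock_cong[OF star_alg_on_fock_comp[OF star_alg_on_fock_create_word star_alg_on_fock_ann_word]])
    (auto simp: create_ann_word_def create_word_def ann_word_def)

lemma sum_rank_one:
  fixes c :: "'d::finite list \<Rightarrow> 'd list \<Rightarrow> complex"
  shows "(\<Sum>u\<in>words k. \<Sum>v\<in>words k. c u v * rank_one u v f w)
     = (if length w = k then \<Sum>v\<in>words k. c w v * f v else 0)"
proof -
  have "(\<Sum>u\<in>words k. \<Sum>v\<in>words k. c u v * rank_one u v f w)
      = (\<Sum>u\<in>words k. if u = w then \<Sum>v\<in>words k. c w v * f v else 0)"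
    by (rule sum.cong) (auto simp: rank_one_def)
  then show ?thesis by (simp add: sum.delta words_def)
qed

lemma sum_create_ann_word:
  fixes c :: "'d::finite list \<Rightarrow> 'd list \<Rightarrow> complex"
  shows "(\<Sum>u\<in>words N. \<Sum>v\<in>words N. c u v * create_ann_word u v f w)
     = (if N \<le> length w then \<Sum>v\<in>words N. c (take N w) v * f (v @ drop N w) else 0)"
proof -
  have "(\<Sum>u\<in>words N. \<Sum>v\<in>words N. c u v * create_ann_word u v f w)
      = (\<Sum>u\<in>words N. if u = take N w then \<Sum>v\<in>words N. c (take N w) v * f (v @ drop N w) else 0)"
  proof (rule sum.cong[OF refl])
    fix u :: "'d list" assume "u \<in> words N"
    then have u: "length u = N" by (simp add: words_def)
    show "(\<Sum>v\<in>words N. c u v * create_ann_word u v f w)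
        = (if u = take N w then \<Sum>v\<in>words N. c (take N w) v * f (v @ drop N w) else 0)"
      unfolding create_ann_word_def u by (auto intro!: sum.cong)
  qed
  then show ?thesis by (simp add: sum.delta words_def min_def)
qed

subsection \<open>Ampliation\<close>

text \<open>\<open>ampliate m X\<close> is \<open>X \<otimes> I\<close> on \<open>F\<^bsub>m+r\<^esub> = F\<^sub>m \<otimes> F\<^sub>r\<close>: \<open>X\<close> acts on the first \<open>m\<close> letters.\<close>

definition ampliate :: "nat \<Rightarrow> 'd op \<Rightarrow> 'd op" where
  "ampliate m X g = (\<lambda>w. X (\<lambda>v. if length v = m then g (v @ drop m w) else 0) (take m w))"

lemma tensor_id_eq_ampliate:
  assumes "length w = Suc m"
  shows "tensor_id m T f w = ampliate m T f w"
proof -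
  have w: "w = butlast w @ [last w]" using assms by (metis append_butlast_last_id list.size(3) nat.distinct(1))
  have "length (butlast w) = m" using assms by simp
  then have "drop m (butlast w @ [last w]) = [last w]" "take m (butlast w @ [last w]) = butlast w"
    by simp_all
  then have "drop m w = [last w]" "take m w = butlast w" using w by metis+
  then show ?thesis unfolding tensor_id_def ampliate_def using assms by (simp only:) simp
qed

lemma ampliate_L2_bound:
  fixes X :: "'d::finite op"
  assumes bound: "\<And>h. h \<in> fock_n m \<Longrightarrow>
      L2_set (\<lambda>u. cmod (X h u)) (words m) \<le> c * L2_set (\<lambda>u. cmod (h u)) (words m)"
    and c: "0 \<le> c"
  shows "L2_set (\<lambda>w. cmod (ampliate m X g w)) (words (m + r))
    \<le> c * L2_set (\<lambda>w. cmod (g w)) (words (m + r))"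
  unfolding L2_set_le_scaled_iff[OF c]
proof -
  define g_z where "g_z z = (\<lambda>v. if length v = m then g (v @ z) else 0)" for z
  have g_z: "g_z z \<in> fock_n m" for z by (simp add: fock_n_iff g_z_def)
  have ampliate_app: "ampliate m X g (u @ z) = X (g_z z) u" if "u \<in> words m" for u z
  proof -
    have "drop m (u @ z) = z" "take m (u @ z) = u" using that by (simp_all add: words_def)
    then show ?thesis unfolding ampliate_def g_z_def by (simp only:)
  qed
  have "(\<Sum>w\<in>words (m + r). (cmod (ampliate m X g w))\<^sup>2)
      = (\<Sum>u\<in>words m. \<Sum>z\<in>words r. (cmod (X (g_z z) u))\<^sup>2)"
    by (simp add: sum_words_add ampliate_app)
  also have "\<dots> = (\<Sum>z\<in>words r. \<Sum>u\<in>words m. (cmod (X (g_z z) u))\<^sup>2)"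
    by (rule sum.swap)
  also have "\<dots> \<le> (\<Sum>z\<in>words r. c\<^sup>2 * (\<Sum>u\<in>words m. (cmod (g_z z u))\<^sup>2))"
    using bound[OF g_z] by (intro sum_mono) (simp add: L2_set_le_scaled_iff[OF c])
  also have "\<dots> = c\<^sup>2 * (\<Sum>u\<in>words m. \<Sum>z\<in>words r. (cmod (g (u @ z)))\<^sup>2)"
    by (simp add: sum_distrib_left g_z_def words_def, rule sum.swap)
  also have "\<dots> = c\<^sup>2 * (\<Sum>w\<in>words (m + r). (cmod (g w))\<^sup>2)"
    by (simp add: sum_words_add)
  finally show "(\<Sum>w\<in>words (m + r). (cmod (ampliate m X g w))\<^sup>2)
      \<le> c\<^sup>2 * (\<Sum>w\<in>words (m + r). (cmod (g w))\<^sup>2)" .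
qed

subsection \<open>Truncations of a block-diagonal operator\<close>

locale block_diagonal_op =
  fixes T :: "'d::finite op"
  assumes bounded: "bounded_op T" and block_diagonal: "block_diagonal T"
begin

lemma T_fock: "f \<in> fock \<Longrightarrow> T f \<in> fock"
  using bounded unfolding bounded_op_def by blast

lemma T_linear: "f \<in> fock \<Longrightarrow> g \<in> fock \<Longrightarrow> T (\<lambda>w. a * f w + b * g w) = (\<lambda>w. a * T f w + b * T g w)"
  using bounded unfolding bounded_op_def by blast

lemma T_scale: "f \<in> fock \<Longrightarrow> T (\<lambda>w. c * f w) = (\<lambda>w. c * T f w)"
  using T_linear[of f f c 0] by simp

lemma T_add: "f \<in> fock \<Longrightarrow> g \<in> fock \<Longrightarrow> T (\<lambda>w. f w + g w) = (\<lambda>w. T f w + T g w)"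
  using T_linear[of f g 1 1] by simp

lemma T_sum:
  assumes "finite A" "\<And>v. v \<in> A \<Longrightarrow> g v \<in> fock"
  shows "T (\<lambda>w. \<Sum>v\<in>A. c v * g v w) = (\<lambda>w. \<Sum>v\<in>A. c v * T (g v) w)"
  using assms
proof (induction A rule: finite_induct)
  case empty
  show ?case using T_scale[of "\<lambda>w. 0" 0] by simp
next
  case (insert x A)
  have "(\<lambda>w. \<Sum>v\<in>A. c v * g v w) \<in> fock" using insert by (intro fock_sum) auto
  then show ?case
    using insert T_linear[of "g x" "\<lambda>w. \<Sum>v\<in>A. c v * g v w" "c x" 1] by simp
qed

lemma T_bound: obtains C where "C \<ge> 0" "\<And>f. f \<in> fock \<Longrightarrow> fnorm (T f) \<le> C * fnorm f"
proof -
  obtain C where C: "\<forall>f\<in>fock. fnorm (T f) \<le> C * fnorm f" using bounded unfolding bounded_op_def by blast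
  have "fnorm (T f) \<le> \<bar>C\<bar> * fnorm f" if "f \<in> fock" for f
    using C that mult_right_mono[OF abs_ge_self fnorm_nonneg, of C f] by fastforce
  then show ?thesis using that[of "\<bar>C\<bar>"] by simp
qed

lemma T_fock_n: "f \<in> fock_n n \<Longrightarrow> T f \<in> fock_n n"
  using block_diagonal unfolding block_diagonal_def by blast

lemma T_L2_bound:
  obtains C where "C \<ge> 0" "\<And>h m. h \<in> fock_n m \<Longrightarrow>
      L2_set (\<lambda>u. cmod (T h u)) (words m) \<le> C * L2_set (\<lambda>u. cmod (h u)) (words m)"
proof -
  obtain C where C: "C \<ge> 0" "\<And>f. f \<in> fock \<Longrightarrow> fnorm (T f) \<le> C * fnorm f" using T_bound by blast
  have "L2_set (\<lambda>u. cmod (T h u)) (words m) \<le> C * L2_set (\<lambda>u. cmod (h u)) (words m)"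
    if h: "h \<in> fock_n m" for h m
    using C(2)[of h] h fnorm_fock_n[OF h] fnorm_fock_n[OF T_fock_n[OF h]] by (simp add: fock_n_def)
  with C(1) show ?thesis by (rule that)
qed

lemma T_expand:
  assumes "finite A" "\<And>w. w \<notin> A \<Longrightarrow> h w = 0"
  shows "T h u = (\<Sum>v\<in>A. h v * T (basis v) u)"
proof -
  have "h = (\<lambda>w. \<Sum>v\<in>A. h v * basis v w)"
  proof
    fix w
    have "(\<Sum>v\<in>A. h v * basis v w) = (\<Sum>v\<in>A. if w = v then h w else 0)"
      by (rule sum.cong) (auto simp: basis_def)
    then show "h w = (\<Sum>v\<in>A. h v * basis v w)" using assms by (simp add: sum.delta)
  qed
  then have "T h = (\<lambda>w. \<Sum>v\<in>A. h v * T (basis v) w)"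
    using T_sum[OF assms(1), of basis h] basis_fock by metis
  then show ?thesis by simp
qed

lemma T_basis_off_block: "length u \<noteq> length v \<Longrightarrow> T (basis v) u = 0"
  using T_fock_n[of "basis v" "length v"] by (simp add: fock_n_iff basis_def)

lemma T_local_finite_support:
  assumes "finite A" "\<And>x. x \<notin> A \<Longrightarrow> f x = 0"
  shows "T f w = T (\<lambda>x. if length x = length w then f x else 0) w"
proof -
  have "T f w = (\<Sum>v\<in>A. f v * T (basis v) w)" by (rule T_expand) (use assms in auto)
  also have "\<dots> = (\<Sum>v\<in>A. (if length v = length w then f v else 0) * T (basis v) w)"
    by (rule sum.cong) (auto simp: T_basis_off_block)
  also have "\<dots> = T (\<lambda>x. if length x = length w then f x else 0) w"
    by (rule T_expand[symmetric]) (use assms in auto)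
  finally show ?thesis .
qed

text \<open>Block-diagonality only says that \<open>T\<close> preserves each \<open>F\<^sub>n\<close>; to see that \<open>T f\<close> on \<open>F\<^sub>n\<close> only
  depends on the \<open>F\<^sub>n\<close>-component of \<open>f\<close>, split \<open>f\<close> into finitely many blocks and a small tail.\<close>

lemma T_local:
  assumes f: "f \<in> fock"
  shows "T f w = T (\<lambda>x. if length x = length w then f x else 0) w"
proof -
  obtain C where C: "C \<ge> 0" "\<And>f. f \<in> fock \<Longrightarrow> fnorm (T f) \<le> C * fnorm f" using T_bound by blast
  define r where "r = (\<lambda>x. if length x = length w then f x else 0)"
  have "cmod (T f w - T r w) \<le> 0 + e" if e: "e > 0" for e
  proof -
    obtain M0 where M0: "\<And>M. M \<ge> M0 \<Longrightarrow> fnorm (\<lambda>x. if M \<le> length x then f x else 0) < e / (C + 1)"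
      using fnorm_tail_small[OF f, of "e / (C + 1)"] e C(1) by auto
    define M where "M = max M0 (Suc (length w))"
    define f_head where "f_head = (\<lambda>x. if length x < M then f x else 0)"
    define f_tail where "f_tail = (\<lambda>x. if M \<le> length x then f x else 0)"
    have f_head: "f_head \<in> fock" and f_tail: "f_tail \<in> fock"
      unfolding f_head_def f_tail_def by (simp_all add: fock_restrict f)
    have "f = (\<lambda>x. f_head x + f_tail x)" by (auto simp: f_head_def f_tail_def)
    then have "T f w = T f_head w + T f_tail w" using T_add[OF f_head f_tail] by metis
    moreover have "T f_head w = T (\<lambda>x. if length x = length w then f_head x else 0) w"
      by (rule T_local_finite_support[of "{x. length x < M}"]) (auto simp: f_head_def)
    moreover have "(\<lambda>x. if length x = length w then f_head x else 0) = r"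
    proof
      fix x
      have "length w < M" by (simp add: M_def)
      then show "(if length x = length w then f_head x else 0) = r x"
        by (simp add: f_head_def r_def)
    qed
    ultimately have "cmod (T f w - T r w) = cmod (T f_tail w)" by simp
    also have "\<dots> \<le> fnorm (T f_tail)" by (rule norm_le_fnorm[OF T_fock[OF f_tail]])
    also have "\<dots> \<le> C * fnorm f_tail" using C(2)[OF f_tail] .
    also have "\<dots> \<le> C * (e / (C + 1))"
      using M0[of M] C(1) by (intro mult_left_mono) (auto simp: M_def f_tail_def)
    also have "\<dots> \<le> 0 + e" using C(1) e by (simp add: field_simps)
    finally show ?thesis .
  qed
  then have "cmod (T f w - T r w) \<le> 0" by (rule field_le_epsilon)
  then show ?thesis by (simp add: r_def)
qed

definition defect :: "nat \<Rightarrow> 'd op" where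
  "defect m = op_diff T (tensor_id m T)"

definition defect_norm :: "nat \<Rightarrow> real" where
  "defect_norm m = opnorm_on (fock_n (Suc m)) (defect m)"

lemma defect_norm_nonneg: "0 \<le> defect_norm m"
  and L2_set_defect_le: "h \<in> fock_n (Suc m) \<Longrightarrow>
    L2_set (\<lambda>w. cmod (defect m h w)) (words (Suc m)) \<le> defect_norm m * L2_set (\<lambda>w. cmod (h w)) (words (Suc m))"
proof -
  obtain C where C: "C \<ge> 0" "\<And>h m. h \<in> fock_n m \<Longrightarrow>
      L2_set (\<lambda>u. cmod (T h u)) (words m) \<le> C * L2_set (\<lambda>u. cmod (h u)) (words m)"
    using T_L2_bound by blast
  have homogeneous: "defect m (\<lambda>w. c * h w) = (\<lambda>w. c * defect m h w)" if h: "h \<in> fock_n (Suc m)" for h c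
  proof -
    have "(\<lambda>v. if length v = m then h (v @ [j]) else 0) \<in> fock_n m" for j
      by (simp add: fock_n_iff)
    then have slice: "(\<lambda>v. if length v = m then h (v @ [j]) else 0) \<in> fock" for j
      by (simp add: fock_n_def)
    have "tensor_id m T (\<lambda>w. c * h w) w = c * tensor_id m T h w" for w
      using T_scale[OF slice, of c "last w"] by (auto simp: tensor_id_def if_distrib[of "(*) c"] cong: if_cong)
    moreover have "T (\<lambda>w. c * h w) = (\<lambda>w. c * T h w)" using h by (simp add: T_scale fock_n_def)
    ultimately show ?thesis by (simp add: defect_def op_diff_def right_diff_distrib)
  qed
  have supported: "defect m h w = 0" if "h \<in> fock_n (Suc m)" "length w \<noteq> Suc m" for h w
    using T_fock_n[OF that(1)] that(2) by (simp add: defect_def op_diff_def tensor_id_def fock_n_iff)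
  have bounded: "L2_set (\<lambda>w. cmod (defect m h w)) (words (Suc m))
      \<le> (2 * C) * L2_set (\<lambda>w. cmod (h w)) (words (Suc m))" if h: "h \<in> fock_n (Suc m)" for h
  proof -
    have "L2_set (\<lambda>w. cmod (defect m h w)) (words (Suc m)) \<le>
        L2_set (\<lambda>w. cmod (T h w)) (words (Suc m)) + L2_set (\<lambda>w. cmod (- tensor_id m T h w)) (words (Suc m))"
      unfolding defect_def op_diff_def using L2_set_cmod_add[of "T h" "\<lambda>w. - tensor_id m T h w"] by simp
    also have "L2_set (\<lambda>w. cmod (- tensor_id m T h w)) (words (Suc m))
        = L2_set (\<lambda>w. cmod (ampliate m T h w)) (words (m + 1))"
      by (rule L2_set_cong) (auto simp: words_def tensor_id_eq_ampliate)
    also have "\<dots> \<le> C * L2_set (\<lambda>w. cmod (h w)) (words (m + 1))"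
      by (rule ampliate_L2_bound[OF C(2) C(1)])
    finally show ?thesis using C(2)[OF h] by simp
  qed
  show "0 \<le> defect_norm m"
    unfolding defect_norm_def by (rule opnorm_on_fock_n_nonneg[OF homogeneous supported bounded])
  show "h \<in> fock_n (Suc m) \<Longrightarrow>
    L2_set (\<lambda>w. cmod (defect m h w)) (words (Suc m)) \<le> defect_norm m * L2_set (\<lambda>w. cmod (h w)) (words (Suc m))"
    unfolding defect_norm_def by (rule L2_set_le_opnorm_on_fock_n[OF homogeneous supported bounded])
qed

lemma defect_norm_tail_nonneg: "summable defect_norm \<Longrightarrow> 0 \<le> (\<Sum>i. defect_norm (i + N))"
  by (simp add: summable_iff_shift suminf_nonneg defect_norm_nonneg)

lemma ampliate_self:
  assumes "g \<in> fock_n k" and "length w = k"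
  shows "ampliate k T g w = T g w"
proof -
  have "(\<lambda>v. if length v = k then g (v @ drop k w) else 0) = g"
    using assms by (auto simp: fock_n_iff)
  then show ?thesis using assms(2) by (simp add: ampliate_def)
qed

lemma ampliate_Suc_diff:
  assumes g: "g \<in> fock_n k" and w: "length w = k" and "m < k"
  shows "ampliate (Suc m) T g w - ampliate m T g w = ampliate (Suc m) (defect m) g w"
proof -
  define u where "u = take (Suc m) w"
  define g_u where "g_u = (\<lambda>v. if length v = Suc m then g (v @ drop (Suc m) w) else 0)"
  have u: "u = take m w @ [w ! m]" unfolding u_def using \<open>m < k\<close> w by (simp add: take_Suc_conv_app_nth)
  have "drop m w = w ! m # drop (Suc m) w" using \<open>m < k\<close> w by (simp add: Cons_nth_drop_Suc)
  then have "(\<lambda>v. if length v = m then g_u (v @ [last u]) else 0)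
      = (\<lambda>v. if length v = m then g (v @ drop m w) else 0)"
    by (auto simp: g_u_def u)
  then have "tensor_id m T g_u u = ampliate m T g w"
    unfolding tensor_id_def ampliate_def using u \<open>m < k\<close> w by simp
  moreover have "ampliate (Suc m) T g w = T g_u u"
    by (simp add: ampliate_def g_u_def u_def)
  moreover have "ampliate (Suc m) (defect m) g w = T g_u u - tensor_id m T g_u u"
    by (simp add: ampliate_def g_u_def u_def defect_def op_diff_def)
  ultimately show ?thesis by simp
qed

lemma ampliate_error_L2:
  assumes g: "g \<in> fock_n k" and "N \<le> k"
  shows "L2_set (\<lambda>w. cmod (T g w - ampliate N T g w)) (words k)
    \<le> (\<Sum>m\<in>{N..<k}. defect_norm m) * L2_set (\<lambda>w. cmod (g w)) (words k)"
proof -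
  have telescope: "T g w - ampliate N T g w = (\<Sum>m\<in>{N..<k}. ampliate (Suc m) (defect m) g w)"
    if "w \<in> words k" for w
  proof -
    have w: "length w = k" using that by (simp add: words_def)
    have "(\<Sum>m\<in>{N..<k}. ampliate (Suc m) (defect m) g w)
        = (\<Sum>m\<in>{N..<k}. ampliate (Suc m) T g w - ampliate m T g w)"
      by (rule sum.cong) (auto simp: ampliate_Suc_diff[OF g w])
    also have "\<dots> = ampliate k T g w - ampliate N T g w" by (rule sum_Suc_diff'[OF \<open>N \<le> k\<close>])
    finally show ?thesis using ampliate_self[OF g w] by simp
  qed
  have "L2_set (\<lambda>w. cmod (T g w - ampliate N T g w)) (words k)
      = L2_set (\<lambda>w. cmod (\<Sum>m\<in>{N..<k}. ampliate (Suc m) (defect m) g w)) (words k)"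
    by (rule L2_set_cong) (auto simp: telescope)
  also have "\<dots> \<le> (\<Sum>m\<in>{N..<k}. L2_set (\<lambda>w. cmod (ampliate (Suc m) (defect m) g w)) (words k))"
    by (rule L2_set_cmod_sum) simp
  also have "\<dots> \<le> (\<Sum>m\<in>{N..<k}. defect_norm m * L2_set (\<lambda>w. cmod (g w)) (words k))"
  proof (rule sum_mono)
    fix m assume "m \<in> {N..<k}"
    then have k: "k = Suc m + (k - Suc m)" by auto
    show "L2_set (\<lambda>w. cmod (ampliate (Suc m) (defect m) g w)) (words k)
        \<le> defect_norm m * L2_set (\<lambda>w. cmod (g w)) (words k)"
      by (subst (1 2) k, rule ampliate_L2_bound[OF L2_set_defect_le defect_norm_nonneg])
  qed
  also have "\<dots> = (\<Sum>m\<in>{N..<k}. defect_norm m) * L2_set (\<lambda>w. cmod (g w)) (words k)"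
    by (simp add: sum_distrib_right)
  finally show ?thesis .
qed

definition truncation :: "nat \<Rightarrow> 'd op" where
  "truncation N f w =
    (if length w < N then \<Sum>v\<in>words (length w). T (basis v) w * f v
     else \<Sum>v\<in>words N. T (basis v) (take N w) * f (v @ drop N w))"

lemma truncation_fock_n:
  assumes g: "g \<in> fock_n k" and w: "length w = k"
  shows "truncation N g w = (if k < N then T g w else ampliate N T g w)"
proof (cases "k < N")
  case True
  have "T g w = (\<Sum>v\<in>words k. g v * T (basis v) w)"
    by (rule T_expand) (use g in \<open>auto simp: fock_n_iff words_def\<close>)
  then show ?thesis using True w by (simp add: truncation_def mult.commute)
next
  case False
  have "ampliate N T g w
      = (\<Sum>v\<in>words N. (if length v = N then g (v @ drop N w) else 0) * T (basis v) (take N w))"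
    unfolding ampliate_def by (rule T_expand) (auto simp: words_def)
  also have "\<dots> = (\<Sum>v\<in>words N. T (basis v) (take N w) * g (v @ drop N w))"
    by (rule sum.cong) (auto simp: words_def)
  finally show ?thesis using False w by (simp add: truncation_def)
qed

lemma truncation_local:
  "truncation N f w = truncation N (\<lambda>x. if length x = length w then f x else 0) w"
  unfolding truncation_def by (auto simp: words_def intro!: sum.cong)

lemma truncation_matrix_expansion:
  "truncation N f w
    = (\<Sum>k<N. \<Sum>u\<in>words k. \<Sum>v\<in>words k. T (basis v) u * rank_one u v f w)
      + (\<Sum>u\<in>words N. \<Sum>v\<in>words N. T (basis v) u * create_ann_word u v f w)"
  by (simp add: sum_rank_one sum_create_ann_word sum.delta' truncation_def)

lemma star_alg_on_fock_truncation: "star_alg_on_fock (truncation N)"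
proof -
  have "star_alg_on_fock (\<lambda>f w.
      (\<Sum>k<N. \<Sum>u\<in>words k. \<Sum>v\<in>words k. T (basis v) u * rank_one u v f w)
      + (\<Sum>u\<in>words N. \<Sum>v\<in>words N. T (basis v) u * create_ann_word u v f w))"
    by (intro star_alg_on_fock_add star_alg_on_fock_sum star_alg_on_fock_scale
        star_alg_on_fock_rank_one star_alg_on_fock_create_ann_word finite_lessThan finite_words)
  then show ?thesis by (rule star_alg_on_fock_cong) (simp add: fun_eq_iff truncation_matrix_expansion)
qed

lemma truncation_error_fock_n:
  assumes summable: "summable defect_norm" and g: "g \<in> fock_n k"
  shows "L2_set (\<lambda>w. cmod (T g w - truncation N g w)) (words k)
    \<le> (\<Sum>i. defect_norm (i + N)) * L2_set (\<lambda>w. cmod (g w)) (words k)"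
proof (cases "k < N")
  case True
  then have "L2_set (\<lambda>w. cmod (T g w - truncation N g w)) (words k) = 0"
    by (intro L2_set_0') (auto simp: words_def truncation_fock_n[OF g])
  then show ?thesis using defect_norm_tail_nonneg[OF summable] by simp
next
  case False
  have "(\<Sum>m\<in>{N..<k}. defect_norm m) = (\<Sum>i<k - N. defect_norm (i + N))"
    using sum.shift_bounds_nat_ivl[of defect_norm 0 N "k - N"] False by (simp add: atLeast0LessThan)
  also have "\<dots> \<le> (\<Sum>i. defect_norm (i + N))"
    using summable by (intro sum_le_suminf) (simp_all add: summable_iff_shift defect_norm_nonneg)
  finally have tail: "(\<Sum>m\<in>{N..<k}. defect_norm m) \<le> (\<Sum>i. defect_norm (i + N))" .
  have "L2_set (\<lambda>w. cmod (T g w - truncation N g w)) (words k)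
      = L2_set (\<lambda>w. cmod (T g w - ampliate N T g w)) (words k)"
    by (rule L2_set_cong) (auto simp: words_def truncation_fock_n[OF g] False)
  also have "\<dots> \<le> (\<Sum>m\<in>{N..<k}. defect_norm m) * L2_set (\<lambda>w. cmod (g w)) (words k)"
    using False by (intro ampliate_error_L2[OF g]) simp
  also have "\<dots> \<le> (\<Sum>i. defect_norm (i + N)) * L2_set (\<lambda>w. cmod (g w)) (words k)"
    using tail by (rule mult_right_mono) simp
  finally show ?thesis .
qed

lemma fnorm_truncation_error:
  assumes summable: "summable defect_norm" and f: "f \<in> fock"
  shows "fnorm (\<lambda>w. T f w - truncation N f w) \<le> (\<Sum>i. defect_norm (i + N)) * fnorm f"
proof (rule fnorm_le_blockwise[OF f])
  show "0 \<le> (\<Sum>i. defect_norm (i + N))" using summable by (rule defect_norm_tail_nonneg)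
  fix k
  define f_k where "f_k = (\<lambda>x. if length x = k then f x else 0)"
  have f_k: "f_k \<in> fock_n k" by (simp add: fock_n_iff f_k_def)
  have "L2_set (\<lambda>w. cmod (T f w - truncation N f w)) (words k)
      = L2_set (\<lambda>w. cmod (T f_k w - truncation N f_k w)) (words k)"
    by (rule L2_set_cong)
      (auto simp: words_def f_k_def T_local[OF f] truncation_local[of N f])
  also have "\<dots> \<le> (\<Sum>i. defect_norm (i + N)) * L2_set (\<lambda>w. cmod (f_k w)) (words k)"
    by (rule truncation_error_fock_n[OF summable f_k])
  also have "L2_set (\<lambda>w. cmod (f_k w)) (words k) = L2_set (\<lambda>w. cmod (f w)) (words k)"
    by (rule L2_set_cong) (auto simp: f_k_def words_def)
  finally show "L2_set (\<lambda>w. cmod (T f w - truncation N f w)) (words k)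
      \<le> (\<Sum>i. defect_norm (i + N)) * L2_set (\<lambda>w. cmod (f w)) (words k)" .
qed

end

theorem lemma3p4:
  fixes T :: "('d::finite) op"
  assumes "CARD('d) \<ge> 2"
    and "bounded_op T"
    and "block_diagonal T"
    and "summable (\<lambda>n. opnorm_on (fock_n (Suc (Suc n))) (op_diff T (tensor_id (Suc n) T)))"
  shows "T \<in> cuntz_toeplitz"
proof -
  interpret block_diagonal_op T using assms(2,3) by unfold_locales
  have summable: "summable defect_norm"
    using assms(4) by (simp add: summable_Suc_iff[of defect_norm, symmetric] defect_norm_def defect_def)
  have "\<exists>S\<in>star_alg_L. opnorm_on fock (op_diff T S) < e" if "e > 0" for e
  proof -
    obtain N where N: "norm (\<Sum>i. defect_norm (i + N)) < e"
      using suminf_exist_split[OF \<open>e > 0\<close> summable] by blast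
    obtain S where S: "S \<in> star_alg_L" "\<And>f. f \<in> fock \<Longrightarrow> S f = truncation N f"
      using star_alg_on_fock_truncation[of N] unfolding star_alg_on_fock_def by blast
    have "opnorm_on fock (op_diff T S) \<le> (\<Sum>i. defect_norm (i + N))"
      by (intro opnorm_on_fock_le defect_norm_tail_nonneg[OF summable])
        (simp add: op_diff_def S fnorm_truncation_error[OF summable])
    also have "\<dots> < e" using N by simp
    finally show ?thesis using S(1) by blast
  qed
  with assms(2) show ?thesis unfolding cuntz_toeplitz_def by blast
qed

end
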